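(* Let $F$ be a monotonic neighborhood frame. Let $G$ be a two-sorted first-order structure that is an elementary extension (in the language $(L_=)^2$) of $(F,\mathscr P(F))$. Let $G'$ be the neighborhood frame whose underlying set is the domain of the state sort of $G$, with neighborhood function $N^{G'}(w)=\{i(U): G\models wNU\}$, where $i(U)=\{v\in G': G\models v\in U\}$ for $U$ in the neighborhood sort of $G$. Then: (i) if $X,Y\subseteq G'$ are definable in $G'$ (by $L_=$-formulas with parameters from $G'$), $X\subseteq Y$, and $X\in N^{G'}(w)$ for some $w\in G'$, then $Y\in N^{G'}(w)$; (ii) if $F$ is an augmented filter frame, then for every $w\in G'$ the family $N^{G'}(w)$ is either empty or has a minimum element with respect to inclusion.
   Context: A neighborhood frame is $F=(F,N^F)$ with $N^F: F\to\mathscr P(\mathscr P(F))$; it is monotonic if each $N^F(w)$ is closed under supersets, and augmented filter if each $N^F(w)$ is a principal upset of $\mathscr P(F)$ (there is $U_0$ with $U\in N^F(w)\iff U_0\subseteq U$). $L_=$ is the least set of formulas containing equality atoms and closed under Boolean combinations, existential quantification, and $x\,\Box_y\,\phi$ ($y$ bound); $F\models w\,\Box_y\,\phi(y)$ iff $\{v: F\models\phi(v)\}\in N^F(w)$. A subset $X$ of a neighborhood frame is definable if $X=\{v: \models\phi(v;\bar a)\}$ for some $L_=$-formula $\phi(x;\bar y)$ and parameters $\bar a$. $(L_=)^2$ is the two-sorted first-order language with a state sort and a neighborhood sort, equality, and binary relation symbols $xNU$ and $x\in U$ ($x$ of state sort, $U$ of neighborhood sort). For a neighborhood frame $F$, $(F,\mathscr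 P(F))$ is the $(L_=)^2$-structure with state sort $F$, neighborhood sort $\mathscr P(F)$, $wNU$ iff $U\in N^F(w)$, and $\in$ interpreted as membership. *)

theory Defs
  imports Main
begin

text \<open>A neighborhood frame is represented by its neighborhood function
  N :: 'a => 'a set set; the underlying set of the frame is the whole type 'a.\<close>

definition monotonic_frame :: "('a \<Rightarrow> 'a set set) \<Rightarrow> bool" where
  "monotonic_frame N \<longleftrightarrow> (\<forall>w U V. U \<in> N w \<longrightarrow> U \<subseteq> V \<longrightarrow> V \<in> N w)"

definition augmented_filter_frame :: "('a \<Rightarrow> 'a set set) \<Rightarrow> bool" where
  "augmented_filter_frame N \<longleftrightarrow> (\<forall>w. \<exists>U0. \<forall>U. U \<in> N w \<longleftrightarrow> U0 \<subseteq> U)"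

datatype lform =
    LEq nat nat
  | LNeg lform
  | LConj lform lform
  | LEx nat lform
  | LBox nat nat lform          (* x Box_y phi, y bound *)

fun lsat :: "('a \<Rightarrow> 'a set set) \<Rightarrow> (nat \<Rightarrow> 'a) \<Rightarrow> lform \<Rightarrow> bool" where
  "lsat N e (LEq x y) \<longleftrightarrow> e x = e y"
| "lsat N e (LNeg \<phi>) \<longleftrightarrow> \<not> lsat N e \<phi>"
| "lsat N e (LConj \<phi> \<psi>) \<longleftrightarrow> lsat N e \<phi> \<and> lsat N e \<psi>"
| "lsat N e (LEx x \<phi>) \<longleftrightarrow> (\<exists>v. lsat N (e(x := v)) \<phi>)"
| "lsat N e (LBox x y \<phi>) \<longleftrightarrow> {v. lsat N (e(y := v)) \<phi>} \<in> N (e x)"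

text \<open>X is definable with parameters: X = {v. phi(v; a)} where the distinguished
  variable x is interpreted by v and the parameters a are given by the
  environment e.\<close>

definition definable :: "('a \<Rightarrow> 'a set set) \<Rightarrow> 'a set \<Rightarrow> bool" where
  "definable N X \<longleftrightarrow> (\<exists>\<phi> x e. X = {v. lsat N (e(x := v)) \<phi>})"

text \<open>State variables and neighborhood variables are natural numbers in separate
  name spaces.\<close>

datatype tform =
    SEq nat nat
  | NEq nat nat
  | NRel nat nat
  | Mem nat nat
  | TNeg tform
  | TConj tform tform
  | ExS nat tform
  | ExN nat tform

fun tsat :: "('s \<Rightarrow> 'n \<Rightarrow> bool) \<Rightarrow> ('s \<Rightarrow> 'n \<Rightarrow> bool)
             \<Rightarrow> (nat \<Rightarrow> 's) \<Rightarrow> (nat \<Rightarrow> 'n) \<Rightarrow> tform \<Rightarrow> bool" where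
  "tsat R M es en (SEq x y) \<longleftrightarrow> es x = es y"
| "tsat R M es en (NEq U V) \<longleftrightarrow> en U = en V"
| "tsat R M es en (NRel x U) \<longleftrightarrow> R (es x) (en U)"
| "tsat R M es en (Mem x U) \<longleftrightarrow> M (es x) (en U)"
| "tsat R M es en (TNeg \<phi>) \<longleftrightarrow> \<not> tsat R M es en \<phi>"
| "tsat R M es en (TConj \<phi> \<psi>) \<longleftrightarrow> tsat R M es en \<phi> \<and> tsat R M es en \<psi>"
| "tsat R M es en (ExS x \<phi>) \<longleftrightarrow> (\<exists>v. tsat R M (es(x := v)) en \<phi>)"
| "tsat R M es en (ExN U \<phi>) \<longleftrightarrow> (\<exists>V. tsat R M es (en(U := V)) \<phi>)"

text \<open>The structure (F, P(F)) associated with a neighborhood frame.\<close>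

definition frame_rel :: "('a \<Rightarrow> 'a set set) \<Rightarrow> 'a \<Rightarrow> 'a set \<Rightarrow> bool" where
  "frame_rel N w U \<longleftrightarrow> U \<in> N w"

definition frame_mem :: "'a \<Rightarrow> 'a set \<Rightarrow> bool" where
  "frame_mem v U \<longleftrightarrow> v \<in> U"

text \<open>(R2, M2) is an elementary extension of (R1, M1), up to the identification
  given by the (injective) sort maps fs, fn: for every formula and every
  assignment into the small structure, truth is preserved and reflected.\<close>

definition elementary_extension_via ::
  "('s1 \<Rightarrow> 's2) \<Rightarrow> ('n1 \<Rightarrow> 'n2)
   \<Rightarrow> ('s1 \<Rightarrow> 'n1 \<Rightarrow> bool) \<Rightarrow> ('s1 \<Rightarrow> 'n1 \<Rightarrow> bool)
   \<Rightarrow> ('s2 \<Rightarrow> 'n2 \<Rightarrow> bool) \<Rightarrow> ('s2 \<Rightarrow> 'n2 \<Rightarrow> bool) \<Rightarrow> bool" where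
  "elementary_extension_via fs fn R1 M1 R2 M2 \<longleftrightarrow>
     inj fs \<and> inj fn \<and>
     (\<forall>\<phi> es en. tsat R1 M1 es en \<phi> \<longleftrightarrow> tsat R2 M2 (fs \<circ> es) (fn \<circ> en) \<phi>)"

definition ext_i :: "('s \<Rightarrow> 'n \<Rightarrow> bool) \<Rightarrow> 'n \<Rightarrow> 's set" where
  "ext_i M U = {v. M v U}"

definition induced_frame :: "('s \<Rightarrow> 'n \<Rightarrow> bool) \<Rightarrow> ('s \<Rightarrow> 'n \<Rightarrow> bool) \<Rightarrow> 's \<Rightarrow> 's set set" where
  "induced_frame R M w = {ext_i M U | U. R w U}"

end

theory Submission
  imports Defs
begin

text \<open>The frame G' is interpreted inside G by the standard translation, which renders
  x \<box>_y \<phi> as \<exists>U (xNU \<and> \<forall>y (y \<in> U \<leftrightarrow> \<phi>)). Monotonicity, comprehension for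
  each translated formula, and the augmented-filter property are (L_=)^2 sentences true
  in (F, P(F)); they therefore hold in G, where they say that the sets i(U) with wNU
  are closed under definable supersets and have a least element.\<close>

fun fvS :: "tform \<Rightarrow> nat set" where
  "fvS (SEq x y) = {x, y}"
| "fvS (NEq U V) = {}"
| "fvS (NRel x U) = {x}"
| "fvS (Mem x U) = {x}"
| "fvS (TNeg \<phi>) = fvS \<phi>"
| "fvS (TConj \<phi> \<psi>) = fvS \<phi> \<union> fvS \<psi>"
| "fvS (ExS x \<phi>) = fvS \<phi> - {x}"
| "fvS (ExN U \<phi>) = fvS \<phi>"

lemma finite_fvS: "finite (fvS \<phi>)"
  by (induction \<phi>) auto

lemma tsat_cong_fvS:
  "(\<And>x. x \<in> fvS \<phi> \<Longrightarrow> es x = es' x) \<Longrightarrow> tsat R M es en \<phi> \<longleftrightarrow> tsat R M es' en \<phi>"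
proof (induction \<phi> arbitrary: es es' en)
  case (ExS x \<phi>)
  have "tsat R M (es(x := v)) en \<phi> \<longleftrightarrow> tsat R M (es'(x := v)) en \<phi>" for v
    by (rule ExS.IH) (use ExS.prems in auto)
  then show ?case by simp
next
  case (ExN U \<phi>)
  have "tsat R M es (en(U := V)) \<phi> \<longleftrightarrow> tsat R M es' (en(U := V)) \<phi>" for V
    by (rule ExN.IH) (use ExN.prems in simp)
  then show ?case by simp
next
  case (TConj \<phi> \<psi>)
  have "tsat R M es en \<phi> \<longleftrightarrow> tsat R M es' en \<phi>" "tsat R M es en \<psi> \<longleftrightarrow> tsat R M es' en \<psi>"
    by (rule TConj.IH; use TConj.prems in simp)+
  then show ?case by simp
next
  case (TNeg \<phi>)
  have "tsat R M es en \<phi> \<longleftrightarrow> tsat R M es' en \<phi>"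
    by (rule TNeg.IH) (use TNeg.prems in simp)
  then show ?case by simp
qed simp_all

definition TAllS :: "nat \<Rightarrow> tform \<Rightarrow> tform" where
  "TAllS x \<phi> = TNeg (ExS x (TNeg \<phi>))"

definition TAllN :: "nat \<Rightarrow> tform \<Rightarrow> tform" where
  "TAllN U \<phi> = TNeg (ExN U (TNeg \<phi>))"

definition TImp :: "tform \<Rightarrow> tform \<Rightarrow> tform" where
  "TImp \<phi> \<psi> = TNeg (TConj \<phi> (TNeg \<psi>))"

definition TIff :: "tform \<Rightarrow> tform \<Rightarrow> tform" where
  "TIff \<phi> \<psi> = TConj (TImp \<phi> \<psi>) (TImp \<psi> \<phi>)"

lemma tsat_TAllS [simp]: "tsat R M es en (TAllS x \<phi>) \<longleftrightarrow> (\<forall>v. tsat R M (es(x := v)) en \<phi>)"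
  and tsat_TAllN [simp]: "tsat R M es en (TAllN U \<phi>) \<longleftrightarrow> (\<forall>V. tsat R M es (en(U := V)) \<phi>)"
  and tsat_TImp [simp]: "tsat R M es en (TImp \<phi> \<psi>) \<longleftrightarrow> (tsat R M es en \<phi> \<longrightarrow> tsat R M es en \<psi>)"
  and tsat_TIff [simp]: "tsat R M es en (TIff \<phi> \<psi>) \<longleftrightarrow> (tsat R M es en \<phi> \<longleftrightarrow> tsat R M es en \<psi>)"
  by (auto simp: TAllS_def TAllN_def TImp_def TIff_def)

definition TAllS_list :: "nat list \<Rightarrow> tform \<Rightarrow> tform" where
  "TAllS_list xs \<phi> = foldr TAllS xs \<phi>"

lemma tsat_TAllS_listI: "(\<And>es. tsat R M es en \<phi>) \<Longrightarrow> tsat R M es en (TAllS_list xs \<phi>)"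
  by (induction xs arbitrary: es) (auto simp: TAllS_list_def)

lemma tsat_TAllS_listD:
  "tsat R M es en (TAllS_list xs \<phi>) \<Longrightarrow>
     tsat R M (\<lambda>y. if y \<in> set xs then es' y else es y) en \<phi>"
proof (induction xs arbitrary: es)
  case Nil
  then show ?case by (simp add: TAllS_list_def)
next
  case (Cons x xs)
  from Cons.prems have "tsat R M (es(x := es' x)) en (TAllS_list xs \<phi>)"
    by (simp add: TAllS_list_def)
  then have "tsat R M (\<lambda>y. if y \<in> set xs then es' y else (es(x := es' x)) y) en \<phi>"
    by (rule Cons.IH)
  moreover have "(\<lambda>y. if y \<in> set xs then es' y else (es(x := es' x)) y)
      = (\<lambda>y. if y \<in> set (x # xs) then es' y else es y)"
    by auto
  ultimately show ?case by simp
qed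

text \<open>The universal closure over the free state variables is what gets transferred.\<close>

lemma elementary_extension_valid:
  assumes ext: "elementary_extension_via fs fn R1 M1 R2 M2"
    and valid: "\<And>es en. tsat R1 M1 es en \<phi>"
  shows "tsat R2 M2 es (fn \<circ> en) \<phi>"
proof -
  define xs where "xs = sorted_list_of_set (fvS \<phi>)"
  have "tsat R1 M1 (\<lambda>_. undefined) en (TAllS_list xs \<phi>)"
    using valid by (rule tsat_TAllS_listI)
  then have "tsat R2 M2 (fs \<circ> (\<lambda>_. undefined)) (fn \<circ> en) (TAllS_list xs \<phi>)"
    using ext by (simp add: elementary_extension_via_def)
  then have "tsat R2 M2 (\<lambda>y. if y \<in> set xs then es y else (fs \<circ> (\<lambda>_. undefined)) y)
      (fn \<circ> en) \<phi>"
    by (rule tsat_TAllS_listD)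
  moreover have "set xs = fvS \<phi>"
    by (simp add: xs_def finite_fvS)
  ultimately show ?thesis
    by (subst (asm) tsat_cong_fvS[where es' = es]) auto
qed

fun tform_of_lform :: "lform \<Rightarrow> tform" where
  "tform_of_lform (LEq x y) = SEq x y"
| "tform_of_lform (LNeg \<phi>) = TNeg (tform_of_lform \<phi>)"
| "tform_of_lform (LConj \<phi> \<psi>) = TConj (tform_of_lform \<phi>) (tform_of_lform \<psi>)"
| "tform_of_lform (LEx x \<phi>) = ExS x (tform_of_lform \<phi>)"
| "tform_of_lform (LBox x y \<phi>) =
     ExN 0 (TConj (NRel x 0) (TAllS y (TIff (Mem y 0) (tform_of_lform \<phi>))))"

lemma induced_frame_iff: "S \<in> induced_frame R M w \<longleftrightarrow> (\<exists>U. R w U \<and> S = ext_i M U)"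
  by (auto simp: induced_frame_def)

lemma tsat_tform_of_lform:
  "tsat R M es en (tform_of_lform \<phi>) \<longleftrightarrow> lsat (induced_frame R M) es \<phi>"
proof (induction \<phi> arbitrary: es en)
  case (LBox x y \<phi>)
  then have "tsat R M es en (tform_of_lform (LBox x y \<phi>)) \<longleftrightarrow>
      (\<exists>U. R (es x) U \<and> ext_i M U = {v. lsat (induced_frame R M) (es(y := v)) \<phi>})"
    by (simp add: ext_i_def set_eq_iff fun_upd_def)
  then show ?case
    by (auto simp: induced_frame_iff)
qed simp_all

lemma elementary_extension_monotonic:
  assumes mono: "monotonic_frame N"
    and ext: "elementary_extension_via fs fn (frame_rel N) frame_mem R M"
    and "R w U" "ext_i M U \<subseteq> ext_i M V"
  shows "R w V"
proof -
  have "tsat R M es (fn \<circ> en)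
     (TAllS 0 (TAllN 0 (TAllN 1
        (TImp (TConj (NRel 0 0) (TAllS 1 (TImp (Mem 1 0) (Mem 1 1)))) (NRel 0 1)))))"
    for es en
    using mono by (intro elementary_extension_valid[OF ext])
      (auto simp: frame_rel_def frame_mem_def monotonic_frame_def)
  then show ?thesis
    using assms(3,4) by (auto simp: ext_i_def)
qed

lemma elementary_extension_definable_ext_i:
  assumes ext: "elementary_extension_via fs fn (frame_rel N) frame_mem R M"
    and "definable (induced_frame R M) Y"
  shows "\<exists>V. Y = ext_i M V"
proof -
  from assms(2) obtain \<psi> x e where Y: "Y = {v. lsat (induced_frame R M) (e(x := v)) \<psi>}"
    by (auto simp: definable_def)
  have "tsat R M e (fn \<circ> en) (ExN 0 (TAllS x (TIff (Mem x 0) (tform_of_lform \<psi>))))" for en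
  proof (rule elementary_extension_valid[OF ext])
    fix es en
    have "\<exists>V. \<forall>v. v \<in> V \<longleftrightarrow> lsat (induced_frame (frame_rel N) frame_mem) (es(x := v)) \<psi>"
      by (rule exI[of _ "{v. lsat (induced_frame (frame_rel N) frame_mem) (es(x := v)) \<psi>}"]) simp
    then show "tsat (frame_rel N) frame_mem es en
        (ExN 0 (TAllS x (TIff (Mem x 0) (tform_of_lform \<psi>))))"
      by (simp only: tsat.simps tsat_TAllS tsat_TIff tsat_tform_of_lform frame_mem_def fun_upd_same)
  qed
  then obtain V where "\<forall>v. M v V \<longleftrightarrow> lsat (induced_frame R M) (e(x := v)) \<psi>"
    by (simp only: tsat.simps tsat_TAllS tsat_TIff tsat_tform_of_lform fun_upd_same) blast
  then show ?thesis
    by (auto simp: Y ext_i_def)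
qed

lemma elementary_extension_augmented:
  assumes aug: "augmented_filter_frame N"
    and ext: "elementary_extension_via fs fn (frame_rel N) frame_mem R M"
  shows "\<exists>U0. \<forall>U. R w U \<longleftrightarrow> ext_i M U0 \<subseteq> ext_i M U"
proof -
  have "tsat R M es (fn \<circ> en)
      (TAllS 0 (ExN 0 (TAllN 1 (TIff (NRel 0 1) (TAllS 1 (TImp (Mem 1 0) (Mem 1 1)))))))"
    for es en
    using aug by (intro elementary_extension_valid[OF ext])
      (auto simp: frame_rel_def frame_mem_def augmented_filter_frame_def subset_iff)
  then show ?thesis
    by (auto simp: ext_i_def subset_iff)
qed

theorem lemma4p3:
  fixes N :: "'a \<Rightarrow> 'a set set"
    and R M :: "'s \<Rightarrow> 'n \<Rightarrow> bool"
    and fs :: "'a \<Rightarrow> 's" and fn :: "'a set \<Rightarrow> 'n"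
  assumes mono: "monotonic_frame N"
    and ext: "elementary_extension_via fs fn (frame_rel N) frame_mem R M"
  shows "(\<forall>X Y w. definable (induced_frame R M) X \<longrightarrow> definable (induced_frame R M) Y
            \<longrightarrow> X \<subseteq> Y \<longrightarrow> X \<in> induced_frame R M w \<longrightarrow> Y \<in> induced_frame R M w)
         \<and> (augmented_filter_frame N \<longrightarrow>
              (\<forall>w. induced_frame R M w = {} \<or>
                   (\<exists>U0 \<in> induced_frame R M w. \<forall>U \<in> induced_frame R M w. U0 \<subseteq> U)))"
proof (intro conjI allI impI)
  fix X Y w
  assume "definable (induced_frame R M) Y" "X \<subseteq> Y" "X \<in> induced_frame R M w"
  then obtain U V where "R w U" "X = ext_i M U" "Y = ext_i M V"
    using elementary_extension_definable_ext_i[OF ext] by (meson induced_frame_iff)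
  with \<open>X \<subseteq> Y\<close> have "R w V"
    using elementary_extension_monotonic[OF mono ext] by blast
  with \<open>Y = ext_i M V\<close> show "Y \<in> induced_frame R M w"
    by (auto simp: induced_frame_iff)
next
  fix w
  assume "augmented_filter_frame N"
  then obtain U0 where "\<And>U. R w U \<longleftrightarrow> ext_i M U0 \<subseteq> ext_i M U"
    using elementary_extension_augmented[OF _ ext] by blast
  then have "ext_i M U0 \<in> induced_frame R M w" "\<forall>U \<in> induced_frame R M w. ext_i M U0 \<subseteq> U"
    by (auto simp: induced_frame_iff)
  then show "induced_frame R M w = {} \<or>
      (\<exists>U0 \<in> induced_frame R M w. \<forall>U \<in> induced_frame R M w. U0 \<subseteq> U)"
    by blast
qed

end
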